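(* Fix integers $k\ge 3$ and $r\ge 1$. For $n\ge 0$ let $d_n$ be the number of words on $[n]^r$ that avoid both $1234$ and $1k(k-1)\cdots 2$. Then the sequence $(d_n)_{n\ge0}$ satisfies a linear recurrence with constant coefficients; equivalently, $\sum_{n\ge 0} d_n x^n$ is a rational function of $x$.
   Context: A word on $[n]^r$ is a word in which each letter $1,2,\dots,n$ appears exactly $r$ times and no other letter appears (for $r=1$ these are the permutations of $[n]$). A word $w_1\cdots w_m$ contains a pattern $p_1\cdots p_k$ if there are indices $i_1<\dots<i_k$ such that for all $r,s$: $w_{i_r}<w_{i_s}\iff p_r<p_s$ and $w_{i_r}>w_{i_s}\iff p_r>p_s$; otherwise it avoids it. The pattern $1k(k-1)\cdots 2$ is $1$ followed by $k,k-1,\dots,2$. *)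

theory Defs
  imports Complex_Main
begin

definition words :: "nat \<Rightarrow> nat \<Rightarrow> nat list set" where
  "words n r = {w. set w \<subseteq> {1..n} \<and> (\<forall>i\<in>{1..n}. count_list w i = r)}"

definition contains :: "nat list \<Rightarrow> nat list \<Rightarrow> bool" where
  "contains w p \<longleftrightarrow> (\<exists>f :: nat \<Rightarrow> nat.
      strict_mono_on {0..<length p} f \<and> (\<forall>j<length p. f j < length w) \<and>
      (\<forall>a<length p. \<forall>b<length p.
          (w ! f a < w ! f b \<longleftrightarrow> p ! a < p ! b) \<and>
          (w ! f a > w ! f b \<longleftrightarrow> p ! a > p ! b)))"

definition avoids :: "nat list \<Rightarrow> nat list \<Rightarrow> bool" where
  "avoids w p \<longleftrightarrow> \<not> contains w p"

definition pat1k :: "nat \<Rightarrow> nat list" where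
  "pat1k k = 1 # rev [2..<k+1]"

definition d :: "nat \<Rightarrow> nat \<Rightarrow> nat \<Rightarrow> nat" where
  "d k r n = card {w \<in> words n r. avoids w [1,2,3,4] \<and> avoids w (pat1k k)}"

end

theory Submission
  imports Defs "HOL-Library.Sublist"
begin

text \<open>Complementing letters, \<open>x \<mapsto> n + 1 - x\<close>, turns the problem into counting words
  avoiding 4321 and \<open>k 1 2 \<dots> (k-1)\<close>. Both patterns begin with their largest letter, so a word
  on \<open>[n+1]\<^sup>r\<close> avoids them iff deleting the letter \<open>n + 1\<close> leaves such a word and everything
  after a copy of \<open>n + 1\<close> is tame, i.e. avoids 321 and \<open>1 2 \<dots> (k-1)\<close>. Hence the words of size
  \<open>n + 1\<close> arise from those of size \<open>n\<close> by inserting the \<open>r\<close> copies of \<open>n + 1\<close> into the longest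
  tame suffix, and the longest tame suffix of the result depends only on the standardization of
  the old one. A tame word has at most \<open>2(k-1)\<close> distinct letters, so with each letter used at
  most \<open>r\<close> times only finitely many standardized suffixes occur: the counts refined by that suffix
  evolve by a fixed transfer matrix, and their total satisfies a linear recurrence.\<close>

section \<open>Patterns as order-isomorphic subsequences\<close>

definition order_iso :: "nat list \<Rightarrow> nat list \<Rightarrow> bool" where
  "order_iso s p \<longleftrightarrow> length s = length p \<and>
     (\<forall>a<length p. \<forall>b<length p. s ! a < s ! b \<longleftrightarrow> p ! a < p ! b)"

lemma subseq_set: "subseq s w \<Longrightarrow> set s \<subseteq> set w"
  by (auto simp: subseq_conv_nths dest: in_set_nthsD)

lemma subseq_distinct: "subseq s w \<Longrightarrow> distinct w \<Longrightarrow> distinct s"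
  by (auto simp: subseq_conv_nths)

lemma subseq_map_nth_strict_mono:
  assumes "strict_mono_on {0..<m} f" "\<forall>j<m. f j < length w"
  shows "subseq (map (\<lambda>j. w ! f j) [0..<m]) w"
proof -
  have "subseq (map (\<lambda>j. w ! f j) [0..<m]) (take N w)"
    if "\<forall>j<m. f j < N" "N \<le> length w" for N
    using assms(1) that
  proof (induction m arbitrary: N)
    case (Suc m)
    have "\<forall>j<m. f j < f m"
      using Suc.prems(1) by (auto simp: strict_mono_on_def)
    then have IH: "subseq (map (\<lambda>j. w ! f j) [0..<m]) (take (f m) w)"
      using Suc by (auto simp: strict_mono_on_def)
    have "f m < length (take N w)"
      using Suc.prems(2,3) by simp
    then have "take N w = take (f m) (take N w) @ take N w ! f m # drop (Suc (f m)) (take N w)"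
      by (rule id_take_nth_drop)
    then have "take N w = take (f m) w @ w ! f m # drop (Suc (f m)) (take N w)"
      using Suc.prems(2) by simp
    moreover have "subseq [w ! f m] (w ! f m # drop (Suc (f m)) (take N w))"
      by simp
    ultimately show ?case
      using list_emb_append_mono[OF IH] by fastforce
  qed simp
  from this[of "length w"] show ?thesis using assms(2) by simp
qed

lemma subseq_obtain_indices:
  "subseq s w \<Longrightarrow> \<exists>f. strict_mono_on {0..<length s} f \<and> (\<forall>j<length s. f j < length w \<and> w ! f j = s ! j)"
proof (induction rule: list_emb.induct)
  case (list_emb_Nil ys)
  then show ?case by (auto simp: strict_mono_on_def)
next
  case (list_emb_Cons xs ys y)
  then obtain f where "strict_mono_on {0..<length xs} f" "\<forall>j<length xs. f j < length ys \<and> ys ! f j = xs ! j"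
    by blast
  then show ?case
    by (intro exI[of _ "\<lambda>j. Suc (f j)"]) (simp add: strict_mono_on_def)
next
  case (list_emb_Cons2 x y xs ys)
  then obtain f where f: "strict_mono_on {0..<length xs} f" "\<forall>j<length xs. f j < length ys \<and> ys ! f j = xs ! j"
    by blast
  define g where "g j = (case j of 0 \<Rightarrow> 0 | Suc i \<Rightarrow> Suc (f i))" for j
  have "strict_mono_on {0..<length (x#xs)} g"
    using f(1) by (auto simp: strict_mono_on_def g_def split: nat.split)
  moreover have "\<forall>j<length (x#xs). g j < length (y#ys) \<and> (y#ys) ! g j = (x#xs) ! j"
    using f(2) list_emb_Cons2.hyps(1) by (auto simp: g_def split: nat.split)
  ultimately show ?case by blast
qed

lemma contains_iff_subseq: "contains w p \<longleftrightarrow> (\<exists>s. subseq s w \<and> order_iso s p)"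
proof
  assume "contains w p"
  then obtain f where f: "strict_mono_on {0..<length p} f" "\<forall>j<length p. f j < length w"
    "\<forall>a<length p. \<forall>b<length p. w ! f a < w ! f b \<longleftrightarrow> p ! a < p ! b"
    unfolding contains_def by blast
  show "\<exists>s. subseq s w \<and> order_iso s p"
    using f subseq_map_nth_strict_mono[OF f(1,2)]
    by (intro exI[of _ "map (\<lambda>j. w ! f j) [0..<length p]"]) (auto simp: order_iso_def)
next
  assume "\<exists>s. subseq s w \<and> order_iso s p"
  then obtain s where s: "subseq s w" "order_iso s p" by blast
  then obtain f where "strict_mono_on {0..<length s} f" "\<forall>j<length s. f j < length w \<and> w ! f j = s ! j"
    using subseq_obtain_indices by blast
  then show "contains w p"
    using s(2) unfolding contains_def order_iso_def by (intro exI[of _ f]) auto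
qed

lemma contains_subseq_mono: "contains x p \<Longrightarrow> subseq x y \<Longrightarrow> contains y p"
  unfolding contains_iff_subseq by (meson subseq_order.order_trans)

lemma not_contains_Nil: "p \<noteq> [] \<Longrightarrow> \<not> contains [] p"
  unfolding contains_iff_subseq order_iso_def by auto

lemma contains_map_iff: "contains (map h x) p \<longleftrightarrow> (\<exists>s. subseq s x \<and> order_iso (map h s) p)"
  unfolding contains_iff_subseq
  by (metis subseq_conv_nths nths_map subseq_map)

lemma strict_antimono_on_less:
  fixes h :: "'a::linorder \<Rightarrow> 'b::linorder"
  assumes "strict_antimono_on A h" "u \<in> A" "v \<in> A"
  shows "h u < h v \<longleftrightarrow> v < u"
  using assms by (cases u v rule: linorder_cases) (auto dest: monotone_onD)

lemma order_iso_map_mono: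
  assumes "strict_mono_on (set s) h"
  shows "order_iso (map h s) p \<longleftrightarrow> order_iso s p"
  using strict_mono_on_less[OF assms] unfolding order_iso_def by auto

lemma order_iso_map_antimono:
  assumes "strict_antimono_on (set s) h" "strict_antimono_on (set p) g"
  shows "order_iso (map h s) (map g p) \<longleftrightarrow> order_iso s p"
  using strict_antimono_on_less[OF assms(1)] strict_antimono_on_less[OF assms(2)]
  unfolding order_iso_def by auto

lemma contains_map_mono:
  assumes "strict_mono_on (set x) h"
  shows "contains (map h x) p \<longleftrightarrow> contains x p"
proof -
  have "order_iso (map h s) p \<longleftrightarrow> order_iso s p" if "subseq s x" for s
    using order_iso_map_mono monotone_on_subset[OF assms subseq_set[OF that]] by blast
  then show ?thesis unfolding contains_map_iff contains_iff_subseq[of x p]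
    by (intro ex_cong1 conj_cong refl)
qed

lemma contains_map_antimono:
  assumes "strict_antimono_on (set x) h" "strict_antimono_on (set p) g"
  shows "contains (map h x) (map g p) \<longleftrightarrow> contains x p"
proof -
  have "order_iso (map h s) (map g p) \<longleftrightarrow> order_iso s p" if "subseq s x" for s
    using order_iso_map_antimono monotone_on_subset[OF assms(1) subseq_set[OF that]] assms(2)
    by blast
  then show ?thesis unfolding contains_map_iff contains_iff_subseq[of x p]
    by (intro ex_cong1 conj_cong refl)
qed

lemma order_iso_Cons_max:
  assumes "\<forall>z\<in>set q. z < x"
  shows "order_iso (y # s) (x # q) \<longleftrightarrow> order_iso s q \<and> (\<forall>z\<in>set s. z < y)"
proof -
  have q: "\<forall>a<length q. q ! a < x" using assms by simp
  have "order_iso (y # s) (x # q) \<longleftrightarrow> length s = length q \<and>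
     (\<forall>a<length q. \<forall>b<length q. s ! a < s ! b \<longleftrightarrow> q ! a < q ! b) \<and>
     (\<forall>a<length q. \<not> y < s ! a \<and> s ! a < y)"
    unfolding order_iso_def using q by (auto simp: All_less_Suc2)
  then show ?thesis
    unfolding order_iso_def all_set_conv_all_nth by auto
qed

lemma order_iso_321: "a > b \<Longrightarrow> b > c \<Longrightarrow> order_iso [a, b, c] [3, 2, 1]"
  unfolding order_iso_def by (auto simp: less_Suc_eq nth_Cons')

lemma sorted_order_iso_upt:
  assumes "sorted_wrt (<) s" "length s = k - 1"
  shows "order_iso s [1..<k]"
proof -
  have "s ! a < s ! b \<longleftrightarrow> a < b" if "a < length s" "b < length s" for a b
    using that sorted_wrt_nth_less[OF assms(1)]
    by (cases a b rule: linorder_cases) fastforce+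
  then show ?thesis using assms(2) by (simp add: order_iso_def)
qed


lemma contains_Cons_max_iff:
  assumes "\<forall>z\<in>set w. z \<le> M" "\<forall>z\<in>set q. z < x"
  shows "contains w (x # q) \<longleftrightarrow> contains (filter (\<lambda>z. z \<noteq> M) w) (x # q) \<or>
           (\<exists>u v. w = u @ M # v \<and> contains (filter (\<lambda>z. z \<noteq> M) v) q)"
proof
  assume "contains w (x # q)"
  then obtain s0 where s0: "subseq s0 w" "order_iso s0 (x # q)"
    unfolding contains_iff_subseq by blast
  then obtain y s where "s0 = y # s"
    by (cases s0) (auto simp: order_iso_def)
  with s0 have s: "subseq (y # s) w" "order_iso s q" "\<forall>z\<in>set s. z < y"
    using order_iso_Cons_max[OF assms(2)] by auto
  show "contains (filter (\<lambda>z. z \<noteq> M) w) (x # q) \<or>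
        (\<exists>u v. w = u @ M # v \<and> contains (filter (\<lambda>z. z \<noteq> M) v) q)"
  proof (cases "y = M")
    case True
    obtain u v where w: "w = u @ M # v" "subseq s v"
      using list_emb_ConsD[OF s(1)] True by auto
    have "filter (\<lambda>z. z \<noteq> M) s = s"
      using s(3) True by (auto simp: filter_id_conv)
    then have "subseq s (filter (\<lambda>z. z \<noteq> M) v)"
      using subseq_filter[OF w(2), of "\<lambda>z. z \<noteq> M"] by simp
    then show ?thesis using w(1) s(2) unfolding contains_iff_subseq by blast
  next
    case False
    have "y < M" using False assms(1) subseq_set[OF s(1)] by force
    then have "filter (\<lambda>z. z \<noteq> M) (y # s) = y # s"
      using s(3) by (auto simp: filter_id_conv)
    then have "subseq (y # s) (filter (\<lambda>z. z \<noteq> M) w)"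
      using subseq_filter[OF s(1), of "\<lambda>z. z \<noteq> M"] by simp
    then show ?thesis
      using s(2,3) order_iso_Cons_max[OF assms(2)] unfolding contains_iff_subseq by blast
  qed
next
  assume "contains (filter (\<lambda>z. z \<noteq> M) w) (x # q) \<or>
          (\<exists>u v. w = u @ M # v \<and> contains (filter (\<lambda>z. z \<noteq> M) v) q)"
  then show "contains w (x # q)"
  proof
    assume "\<exists>u v. w = u @ M # v \<and> contains (filter (\<lambda>z. z \<noteq> M) v) q"
    then obtain u v s where uv: "w = u @ M # v" "subseq s (filter (\<lambda>z. z \<noteq> M) v)" "order_iso s q"
      unfolding contains_iff_subseq by blast
    have "subseq (M # s) w"
      using uv(1) subseq_order.order_trans[OF uv(2) subseq_filter_left] by auto
    moreover have "\<forall>z\<in>set s. z < M"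
    proof
      fix z assume "z \<in> set s"
      then have "z \<in> set w" "z \<noteq> M" using subseq_set[OF uv(2)] uv(1) by auto
      then show "z < M" using assms(1) by force
    qed
    ultimately show ?thesis
      using uv(3) order_iso_Cons_max[OF assms(2)] unfolding contains_iff_subseq by blast
  qed (meson contains_subseq_mono subseq_filter_left)
qed


section \<open>Inserting the largest letter\<close>

text \<open>\<open>dual_avoiding\<close> is the avoidance condition after complementing letters; \<open>tame\<close> is what it
  demands of the part of a word after a copy of its largest letter.\<close>

definition dual_avoiding :: "nat \<Rightarrow> nat list \<Rightarrow> bool" where
  "dual_avoiding k w \<longleftrightarrow> \<not> contains w [4, 3, 2, 1] \<and> \<not> contains w (k # [1..<k])"

definition tame :: "nat \<Rightarrow> nat list \<Rightarrow> bool" where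
  "tame k x \<longleftrightarrow> \<not> contains x [3, 2, 1] \<and> \<not> contains x [1..<k]"

lemma dual_avoiding_max_iff:
  assumes "\<forall>z\<in>set w. z \<le> M"
  shows "dual_avoiding k w \<longleftrightarrow> dual_avoiding k (filter (\<lambda>z. z \<noteq> M) w) \<and>
           (\<forall>u v. w = u @ M # v \<longrightarrow> tame k (filter (\<lambda>z. z \<noteq> M) v))"
proof -
  have "contains w [4, 3, 2, 1] \<longleftrightarrow> contains (filter (\<lambda>z. z \<noteq> M) w) [4, 3, 2, 1] \<or>
          (\<exists>u v. w = u @ M # v \<and> contains (filter (\<lambda>z. z \<noteq> M) v) [3, 2, 1])"
    using contains_Cons_max_iff[OF assms, of "[3, 2, 1]" 4] by simp
  moreover have "contains w (k # [1..<k]) \<longleftrightarrow> contains (filter (\<lambda>z. z \<noteq> M) w) (k # [1..<k]) \<or>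
          (\<exists>u v. w = u @ M # v \<and> contains (filter (\<lambda>z. z \<noteq> M) v) [1..<k])"
    using contains_Cons_max_iff[OF assms, of "[1..<k]" k] by simp
  ultimately show ?thesis unfolding dual_avoiding_def tame_def by blast
qed

lemma tame_Nil: "k \<ge> 2 \<Longrightarrow> tame k []"
  unfolding tame_def using not_contains_Nil by simp

lemma tame_subseq: "tame k y \<Longrightarrow> subseq x y \<Longrightarrow> tame k x"
  unfolding tame_def using contains_subseq_mono by blast

lemma tame_map_mono:
  assumes "strict_mono_on (set x) h"
  shows "tame k (map h x) \<longleftrightarrow> tame k x"
  unfolding tame_def using contains_map_mono[OF assms] by simp

text \<open>The longest tame suffix of a word; it is where the copies of a new largest letter may go.\<close>

definition tame_start :: "nat \<Rightarrow> nat list \<Rightarrow> nat" where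
  "tame_start k w = (LEAST i. tame k (drop i w))"

definition tame_suffix :: "nat \<Rightarrow> nat list \<Rightarrow> nat list" where
  "tame_suffix k w = drop (tame_start k w) w"

definition tame_prefix :: "nat \<Rightarrow> nat list \<Rightarrow> nat list" where
  "tame_prefix k w = take (tame_start k w) w"

lemma tame_start_le_length: "k \<ge> 2 \<Longrightarrow> tame_start k w \<le> length w"
  unfolding tame_start_def by (rule Least_le) (simp add: tame_Nil)

lemma tame_start_le: "tame k (drop i w) \<Longrightarrow> tame_start k w \<le> i"
  unfolding tame_start_def by (rule Least_le)

lemma not_tame_before_tame_start: "i < tame_start k w \<Longrightarrow> \<not> tame k (drop i w)"
  unfolding tame_start_def by (rule not_less_Least)

lemma tame_tame_suffix: "k \<ge> 2 \<Longrightarrow> tame k (tame_suffix k w)"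
  unfolding tame_suffix_def tame_start_def by (rule LeastI[of _ "length w"]) (simp add: tame_Nil)

lemma tame_prefix_append_tame_suffix: "tame_prefix k w @ tame_suffix k w = w"
  unfolding tame_prefix_def tame_suffix_def by simp

lemma length_tame_prefix: "k \<ge> 2 \<Longrightarrow> length (tame_prefix k w) = tame_start k w"
  unfolding tame_prefix_def using tame_start_le_length by simp

lemma tame_suffix_eqI:
  assumes "w = a @ s" "tame k s" "\<forall>i<length a. \<not> tame k (drop i w)"
  shows "tame_suffix k w = s"
proof -
  have "tame_start k w = length a"
    unfolding tame_start_def
  proof (rule Least_equality)
    show "tame k (drop (length a) w)" using assms by simp
  qed (use assms(3) not_less in blast)
  then show ?thesis unfolding tame_suffix_def using assms(1) by simp
qed

lemma set_tame_prefix_subset: "set (tame_prefix k w) \<subseteq> set w"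
  unfolding tame_prefix_def by (rule set_take_subset)

lemma set_tame_suffix_subset: "set (tame_suffix k w) \<subseteq> set w"
  unfolding tame_suffix_def by (rule set_drop_subset)

lemma tame_suffix_map_mono:
  assumes "strict_mono_on (set w) h"
  shows "tame_suffix k (map h w) = map h (tame_suffix k w)"
proof -
  have "tame k (drop i (map h w)) \<longleftrightarrow> tame k (drop i w)" for i
    using tame_map_mono monotone_on_subset[OF assms set_drop_subset[of i w]]
    by (simp add: drop_map)
  then show ?thesis unfolding tame_suffix_def tame_start_def by (simp add: drop_map)
qed


section \<open>Tame words are short\<close>

text \<open>\<open>greedy_desc b xs\<close> greedily picks a decreasing sequence below \<open>b\<close>; every letter left over in
  \<open>greedy_rest b xs\<close> has a smaller letter before it in \<open>b # xs\<close>.\<close>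

fun greedy_desc :: "nat \<Rightarrow> nat list \<Rightarrow> nat list" where
  "greedy_desc b [] = []"
| "greedy_desc b (x # xs) = (if x < b then x # greedy_desc x xs else greedy_desc b xs)"

fun greedy_rest :: "nat \<Rightarrow> nat list \<Rightarrow> nat list" where
  "greedy_rest b [] = []"
| "greedy_rest b (x # xs) = (if x < b then greedy_rest x xs else x # greedy_rest b xs)"

lemma length_greedy_desc_rest: "length (greedy_desc b xs) + length (greedy_rest b xs) = length xs"
  by (induction xs arbitrary: b) auto

lemma subseq_greedy_desc: "subseq (greedy_desc b xs) xs"
  by (induction xs arbitrary: b) auto

lemma subseq_greedy_rest: "subseq (greedy_rest b xs) xs"
  by (induction xs arbitrary: b) auto

lemma greedy_desc_sorted: "sorted_wrt (>) (greedy_desc b xs) \<and> (\<forall>z\<in>set (greedy_desc b xs). z < b)"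
proof (induction xs arbitrary: b)
  case (Cons x xs)
  then show ?case using Cons.IH[of x] Cons.IH[of b] by (auto intro: less_trans)
qed simp

lemma greedy_rest_smaller_before:
  "distinct (b # xs) \<Longrightarrow> subseq (z # s) (greedy_rest b xs) \<Longrightarrow> \<exists>c<z. subseq (c # z # s) (b # xs)"
proof (induction xs arbitrary: b)
  case (Cons x xs)
  show ?case
  proof (cases "x < b")
    case True
    then have "subseq (z # s) (greedy_rest x xs)" "distinct (x # xs)"
      using Cons.prems by auto
    then obtain c where "c < z" "subseq (c # z # s) (x # xs)"
      using Cons.IH by blast
    then show ?thesis by (meson list_emb_Cons)
  next
    case False
    then have "b < x" using Cons.prems(1) by auto
    have r: "subseq (z # s) (x # greedy_rest b xs)" using Cons.prems(2) False by simp
    show ?thesis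
    proof (cases "z = x")
      case True
      then have "subseq s xs"
        using r subseq_order.order_trans[OF _ subseq_greedy_rest] by auto
      then show ?thesis using True \<open>b < x\<close> by auto
    next
      case False
      then have "subseq (z # s) (greedy_rest b xs)" "distinct (b # xs)"
        using r Cons.prems(1) by auto
      then obtain c where "c < z" "subseq (c # z # s) (b # xs)"
        using Cons.IH by blast
      moreover have "subseq (b # xs) (b # x # xs)" by (intro list_emb_Cons2 list_emb_Cons) auto
      ultimately show ?thesis using subseq_order.order_trans by blast
    qed
  qed
qed simp

lemma distinct_length_le_if_avoiding:
  fixes y :: "nat list"
  assumes "distinct y" "\<nexists>a b c. subseq [a, b, c] y \<and> a > b \<and> b > c"
    "\<nexists>s. subseq s y \<and> length s = Suc m \<and> sorted_wrt (<) s"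
  shows "length y \<le> 2 * Suc m"
  using assms
proof (induction m arbitrary: y)
  case 0
  then show ?case by (cases y) (auto dest: spec[of _ "[hd y]"])
next
  case (Suc m)
  show ?case
  proof (cases y)
    case (Cons a ys)
    let ?r = "greedy_rest a ys"
    have "length (greedy_desc a ys) \<le> 1"
    proof (rule ccontr)
      assume "\<not> length (greedy_desc a ys) \<le> 1"
      then obtain p q t where pq: "greedy_desc a ys = p # q # t"
        by (cases "greedy_desc a ys" rule: remdups_adj.cases) auto
      then have "a > p" "p > q" using greedy_desc_sorted[of a ys] by auto
      moreover have "subseq [a, p, q] y"
        using Cons subseq_order.order_trans[OF _ subseq_greedy_desc, of "[p, q]" a ys] pq by simp
      ultimately show False using Suc.prems(2) by blast
    qed
    moreover have "length ?r \<le> 2 * Suc m"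
    proof (rule Suc.IH)
      have r_y: "subseq ?r y" using subseq_greedy_rest[of a ys] Cons by auto
      show "distinct ?r" using subseq_distinct[OF r_y] Suc.prems(1) by simp
      show "\<nexists>p q u. subseq [p, q, u] ?r \<and> p > q \<and> q > u"
        using Suc.prems(2) subseq_order.order_trans[OF _ r_y] by blast
      show "\<nexists>s. subseq s ?r \<and> length s = Suc m \<and> sorted_wrt (<) s"
      proof
        assume "\<exists>s. subseq s ?r \<and> length s = Suc m \<and> sorted_wrt (<) s"
        then obtain z s where zs: "subseq (z # s) ?r" "length s = m" "sorted_wrt (<) (z # s)"
          by (metis length_Suc_conv)
        obtain c where "c < z" "subseq (c # z # s) y"
          using greedy_rest_smaller_before[OF _ zs(1)] Suc.prems(1) Cons by blast
        then show False using Suc.prems(3) zs(2,3) by fastforce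
      qed
    qed
    ultimately show ?thesis using length_greedy_desc_rest[of a ys] Cons by simp
  qed simp
qed

lemma tame_length_le:
  assumes "k \<ge> 3" "tame k x" "\<forall>a. count_list x a \<le> r"
  shows "length x \<le> r * (2 * (k - 1))"
proof -
  let ?y = "remdups x"
  have y_x: "subseq ?y x" by (induction x) auto
  have "Suc (k - 2) = k - 1" using assms(1) by simp
  have "\<nexists>a b c. subseq [a, b, c] ?y \<and> a > b \<and> b > c"
    using assms(2) subseq_order.order_trans[OF _ y_x] order_iso_321
    unfolding tame_def contains_iff_subseq by blast
  moreover have "\<nexists>s. subseq s ?y \<and> length s = Suc (k - 2) \<and> sorted_wrt (<) s"
    using assms(2) subseq_order.order_trans[OF _ y_x] sorted_order_iso_upt[of _ k]
      \<open>Suc (k - 2) = k - 1\<close>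
    unfolding tame_def contains_iff_subseq by metis
  ultimately have "length ?y \<le> 2 * Suc (k - 2)"
    using distinct_length_le_if_avoiding[OF distinct_remdups] by blast
  then have card: "card (set x) \<le> 2 * (k - 1)"
    using assms(1) by (simp add: length_remdups_card_conv)
  have "length x = (\<Sum>a\<in>set x. count_list x a)"
    using sum_count_set[of x "set x"] by simp
  also have "\<dots> \<le> r * card (set x)"
    using sum_mono[of "set x" "count_list x" "\<lambda>_. r"] assms(3) by (simp add: mult.commute)
  also have "\<dots> \<le> r * (2 * (k - 1))" using card by simp
  finally show ?thesis .
qed


section \<open>Standardization and insertions\<close>

definition rank :: "nat list \<Rightarrow> nat \<Rightarrow> nat" where
  "rank xs x = card {y \<in> set xs. y < x}"

definition std :: "nat list \<Rightarrow> nat list" where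
  "std xs = map (rank xs) xs"

lemma strict_mono_on_rank: "strict_mono_on (set xs) (rank xs)"
proof (rule strict_mono_onI)
  fix x y assume "x \<in> set xs" "y \<in> set xs" "x < y"
  then have "{z \<in> set xs. z < x} \<subset> {z \<in> set xs. z < y}" by auto
  then show "rank xs x < rank xs y" unfolding rank_def by (intro psubset_card_mono) auto
qed

lemma rank_less_length:
  assumes "x \<in> set xs"
  shows "rank xs x < length xs"
proof -
  have "{z \<in> set xs. z < x} \<subset> set xs" using assms by auto
  then have "rank xs x < card (set xs)" unfolding rank_def by (intro psubset_card_mono) auto
  also have "\<dots> \<le> length xs" by (rule card_length)
  finally show ?thesis .
qed

lemma std_map_mono:
  assumes "strict_mono_on (set xs) h"
  shows "std (map h xs) = std xs"
proof -
  have "rank (map h xs) (h x) = rank xs x" if "x \<in> set xs" for x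
  proof -
    have "{y \<in> set (map h xs). y < h x} = h ` {y \<in> set xs. y < x}"
      using strict_mono_on_less[OF assms _ that] by auto
    moreover have "inj_on h {y \<in> set xs. y < x}"
      using strict_mono_on_imp_inj_on[OF assms] by (rule inj_on_subset) auto
    ultimately show ?thesis unfolding rank_def by (simp add: card_image)
  qed
  then show ?thesis unfolding std_def by simp
qed

lemma length_std [simp]: "length (std xs) = length xs"
  unfolding std_def by simp

lemma set_std_subset: "set (std xs) \<subseteq> {..<length xs}"
  unfolding std_def using rank_less_length by auto

definition insertions :: "nat \<Rightarrow> nat list \<Rightarrow> nat \<Rightarrow> nat list set" where
  "insertions r T M = {t. filter (\<lambda>z. z \<noteq> M) t = T \<and> count_list t M = r}"

lemma set_insertion: "t \<in> insertions r T M \<Longrightarrow> set t \<subseteq> insert M (set T)"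
  unfolding insertions_def by auto

lemma length_insertion: "t \<in> insertions r T M \<Longrightarrow> length t = length T + r"
  unfolding insertions_def
  using sum_length_filter_compl[of "\<lambda>z. z \<noteq> M" t]
  by (auto simp: count_list_eq_length_filter eq_commute[of M] cong: filter_cong)

lemma finite_insertions: "finite (insertions r T M)"
proof (rule finite_subset)
  show "insertions r T M \<subseteq> {t. set t \<subseteq> insert M (set T) \<and> length t \<le> length T + r}"
    using length_insertion set_insertion by fastforce
qed (simp add: finite_lists_length_le)

lemma count_list_map_inj_on:
  "inj_on h (insert M (set t)) \<Longrightarrow> count_list (map h t) (h M) = count_list t M"
  by (cases "M \<in> set t") (auto simp: count_list_inj_map count_list_0_iff inj_on_image_mem_iff)

lemma filter_map_inj_on:
  assumes "inj_on h (insert M (set t))"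
  shows "filter (\<lambda>z. z \<noteq> h M) (map h t) = map h (filter (\<lambda>z. z \<noteq> M) t)"
proof -
  have "filter (\<lambda>z. h z \<noteq> h M) t = filter (\<lambda>z. z \<noteq> M) t"
    using inj_on_eq_iff[OF assms] by (intro filter_cong) auto
  then show ?thesis by (simp add: filter_map comp_def)
qed

lemma map_insertions_subset:
  assumes "inj_on h (insert M (set T))"
  shows "map h ` insertions r T M \<subseteq> insertions r (map h T) (h M)"
proof
  fix t' assume "t' \<in> map h ` insertions r T M"
  then obtain t where t: "t \<in> insertions r T M" "t' = map h t" by blast
  have inj: "inj_on h (insert M (set t))"
    using inj_on_subset[OF assms] set_insertion[OF t(1)] by blast
  then show "t' \<in> insertions r (map h T) (h M)"
    using t filter_map_inj_on[OF inj] count_list_map_inj_on[OF inj] unfolding insertions_def by simp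
qed

lemma bij_betw_map_insertions:
  assumes "inj_on h (insert M (set T))"
  shows "bij_betw (map h) (insertions r T M) (insertions r (map h T) (h M))"
proof -
  let ?D = "insert M (set T)" and ?g = "inv_into (insert M (set T)) h"
  have g_inj: "inj_on ?g (insert (h M) (set (map h T)))"
    by (rule inj_on_inv_into) auto
  have g_h: "map ?g (map h t) = t" if "set t \<subseteq> ?D" for t
    using that inv_into_f_f[OF assms] by (induction t) auto
  have gT: "map ?g (map h T) = T" by (rule g_h) auto
  have gM: "?g (h M) = M" using inv_into_f_f[OF assms] by simp
  have "map ?g ` insertions r (map h T) (h M) \<subseteq> insertions r (map ?g (map h T)) (?g (h M))"
    by (rule map_insertions_subset[OF g_inj])
  then have g_into: "map ?g ` insertions r (map h T) (h M) \<subseteq> insertions r T M"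
    unfolding gT gM .
  have h_g: "map h (map ?g t') = t'" if "t' \<in> insertions r (map h T) (h M)" for t'
  proof -
    have "set t' \<subseteq> h ` ?D" using set_insertion[OF that] by auto
    then show ?thesis by (induction t') (auto simp: f_inv_into_f)
  qed
  show ?thesis
    by (rule bij_betw_byWitness[where f' = "map ?g"])
       (use g_h set_insertion h_g map_insertions_subset[OF assms] g_into in auto)
qed

text \<open>For a standardized suffix \<open>T\<close>, the letter \<open>length T\<close> exceeds all letters of \<open>T\<close> and plays the
  role of the new largest letter.\<close>

definition transfer :: "nat \<Rightarrow> nat \<Rightarrow> nat list \<Rightarrow> nat list \<Rightarrow> nat" where
  "transfer r k T T' = card {t \<in> insertions r T (length T). std (tame_suffix k t) = T'}"

lemma card_insertions_tame_suffix:
  assumes "\<forall>z\<in>set T. z < M"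
  shows "card {t \<in> insertions r T M. std (tame_suffix k t) = T'} = transfer r k (std T) T'"
proof -
  define h where "h z = (if z = M then length T else rank T z)" for z
  let ?D = "insert M (set T)"
  have "h u < h v" if "u \<in> ?D" "v \<in> ?D" "u < v" for u v
  proof (cases "v = M")
    case True
    then have "u \<in> set T" "u \<noteq> M" using that by auto
    then show ?thesis using rank_less_length True by (simp add: h_def)
  next
    case False
    then have "u \<in> set T" "v \<in> set T" "u \<noteq> M" using that assms by auto
    then show ?thesis using strict_mono_onD[OF strict_mono_on_rank] that False by (simp add: h_def)
  qed
  then have mono: "strict_mono_on ?D h" by (intro strict_mono_onI)
  have "map h T = std T" "h M = length T"
    unfolding std_def h_def using assms by auto
  then have bij: "bij_betw (map h) (insertions r T M) (insertions r (std T) (length T))"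
    using bij_betw_map_insertions[OF strict_mono_on_imp_inj_on[OF mono]] by metis
  have "std (tame_suffix k (map h t)) = std (tame_suffix k t)" if "t \<in> insertions r T M" for t
  proof -
    have t: "strict_mono_on (set t) h"
      using monotone_on_subset[OF mono set_insertion[OF that]] .
    have "set (tame_suffix k t) \<subseteq> set t"
      unfolding tame_suffix_def by (rule set_drop_subset)
    then show ?thesis
      using tame_suffix_map_mono[OF t] std_map_mono monotone_on_subset[OF t] by metis
  qed
  then have "bij_betw (map h) {t \<in> insertions r T M. std (tame_suffix k t) = T'}
      {t \<in> insertions r (std T) (length T). std (tame_suffix k t) = T'}"
    using bij unfolding bij_betw_def inj_on_def by (auto 0 4 simp: image_iff)
  then show ?thesis unfolding transfer_def length_std by (rule bij_betw_same_card)
qed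


section \<open>The transfer recursion\<close>

lemma count_list_filter: "count_list (filter P xs) a = (if P a then count_list xs a else 0)"
  by (induction xs) auto

lemma append_eq_append_Cons_notin:
  assumes "p @ t = u @ M # v" "M \<notin> set p"
  shows "\<exists>u'. t = u' @ M # v"
  using assms by (auto simp: append_eq_append_conv2 append_eq_Cons_conv)

lemma words_length: "w \<in> words n r \<Longrightarrow> length w = n * r"
  unfolding words_def using sum_count_set[of w "{1..n}"] by simp

lemma finite_words: "finite (words n r)"
proof (rule finite_subset)
  show "words n r \<subseteq> {w. set w \<subseteq> {1..n} \<and> length w \<le> n * r}"
    using words_length unfolding words_def by fastforce
qed (simp add: finite_lists_length_le)

definition dual_words :: "nat \<Rightarrow> nat \<Rightarrow> nat \<Rightarrow> nat list set" where
  "dual_words k r n = {w \<in> words n r. dual_avoiding k w}"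

lemma finite_dual_words: "finite (dual_words k r n)"
  unfolding dual_words_def using finite_words by simp

lemma filter_tame_prefix_append_insertion:
  assumes "M \<notin> set w" "t \<in> insertions r (tame_suffix k w) M"
  shows "filter (\<lambda>z. z \<noteq> M) (tame_prefix k w @ t) = w"
proof -
  have "filter (\<lambda>z. z \<noteq> M) (tame_prefix k w) = tame_prefix k w"
    using assms(1) set_tame_prefix_subset by (auto simp: filter_id_conv)
  then show ?thesis
    using assms(2) tame_prefix_append_tame_suffix[of k w] unfolding insertions_def by simp
qed

lemma tame_suffix_tame_prefix_append_insertion:
  assumes "k \<ge> 2" "M \<notin> set w" "t \<in> insertions r (tame_suffix k w) M"
  shows "tame_suffix k (tame_prefix k w @ t) = tame_suffix k t"
proof (rule tame_suffix_eqI)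
  let ?p = "tame_prefix k w" and ?q = "tame_prefix k t"
  show "?p @ t = (?p @ ?q) @ tame_suffix k t"
    using tame_prefix_append_tame_suffix[of k t] by simp
  show "tame k (tame_suffix k t)" using tame_tame_suffix assms(1) by simp
  show "\<forall>i<length (?p @ ?q). \<not> tame k (drop i (?p @ t))"
  proof (intro allI impI)
    fix i assume i: "i < length (?p @ ?q)"
    show "\<not> tame k (drop i (?p @ t))"
    proof (cases "i < length ?p")
      case True
      \<comment> \<open>deleting the new letter from a tame suffix starting inside \<open>?p\<close> would give a tame
        suffix of \<open>w\<close> starting before \<open>tame_start k w\<close>\<close>
      have "drop i w = drop i ?p @ tame_suffix k w"
        using True tame_prefix_append_tame_suffix[of k w] by (metis drop_append diff_is_0_eq less_imp_le drop_0)
      moreover have "filter (\<lambda>z. z \<noteq> M) (drop i ?p) = drop i ?p"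
        using assms(2) set_tame_prefix_subset[of k w] set_drop_subset[of i ?p]
        by (auto simp: filter_id_conv)
      ultimately have "filter (\<lambda>z. z \<noteq> M) (drop i (?p @ t)) = drop i w"
        using True assms(3) unfolding insertions_def by simp
      then have "subseq (drop i w) (drop i (?p @ t))"
        by (metis subseq_filter_left)
      moreover have "i < tame_start k w"
        using True length_tame_prefix[OF assms(1)] by simp
      ultimately show ?thesis
        using not_tame_before_tame_start tame_subseq by blast
    next
      case False
      then have "i - length ?p < tame_start k t"
        using i length_tame_prefix[OF assms(1)] by simp
      then show ?thesis
        using not_tame_before_tame_start False by simp
    qed
  qed
qed

lemma tame_prefix_append_insertion_in_dual_words:
  assumes "k \<ge> 2" "w \<in> dual_words k r n" "t \<in> insertions r (tame_suffix k w) (Suc n)"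
  shows "tame_prefix k w @ t \<in> dual_words k r (Suc n)"
proof -
  let ?M = "Suc n" and ?w = "tame_prefix k w @ t"
  have w: "set w \<subseteq> {1..n}" "\<forall>i\<in>{1..n}. count_list w i = r" "dual_avoiding k w"
    using assms(2) unfolding dual_words_def words_def by auto
  then have M_p: "?M \<notin> set (tame_prefix k w)"
    using set_tame_prefix_subset by fastforce
  have "set t \<subseteq> insert ?M (set w)"
    using set_insertion[OF assms(3)] set_tame_suffix_subset by blast
  then have set_w: "set ?w \<subseteq> {1..?M}"
    using w(1) set_tame_prefix_subset[of k w] by fastforce
  have filter_w: "filter (\<lambda>z. z \<noteq> ?M) ?w = w"
    using filter_tame_prefix_append_insertion assms(3) w(1) by fastforce
  have "count_list ?w i = r" if "i \<in> {1..?M}" for i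
  proof (cases "i = ?M")
    case True
    then show ?thesis using M_p assms(3) unfolding insertions_def by simp
  next
    case False
    then have "count_list ?w i = count_list (filter (\<lambda>z. z \<noteq> ?M) ?w) i"
      using count_list_filter[of "\<lambda>z. z \<noteq> ?M" ?w i] by presburger
    also have "\<dots> = r" using filter_w w(2) that False by simp
    finally show ?thesis .
  qed
  moreover have "dual_avoiding k ?w"
  proof (subst dual_avoiding_max_iff)
    show "\<forall>z\<in>set ?w. z \<le> ?M" using set_w by auto
    have "tame k (filter (\<lambda>z. z \<noteq> ?M) v)" if split: "?w = u @ ?M # v" for u v
    proof -
      obtain u' where "t = u' @ ?M # v"
        using append_eq_append_Cons_notin[OF split M_p] by blast
      then have "filter (\<lambda>z. z \<noteq> ?M) u' @ filter (\<lambda>z. z \<noteq> ?M) v = tame_suffix k w"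
        using assms(3) unfolding insertions_def by simp
      then have "subseq (filter (\<lambda>z. z \<noteq> ?M) v) (tame_suffix k w)"
        by (metis subseq_drop_many subseq_order.order_refl)
      then show ?thesis using tame_tame_suffix[OF assms(1)] tame_subseq by blast
    qed
    then show "dual_avoiding k (filter (\<lambda>z. z \<noteq> ?M) ?w) \<and>
      (\<forall>u v. ?w = u @ ?M # v \<longrightarrow> tame k (filter (\<lambda>z. z \<noteq> ?M) v))"
      using filter_w w(3) by simp
  qed
  ultimately show ?thesis using set_w unfolding dual_words_def words_def by simp
qed


lemma dual_words_Suc_eq_UN:
  assumes "k \<ge> 2" "r \<ge> 1"
  shows "dual_words k r (Suc n) =
    (\<Union>w\<in>dual_words k r n. (\<lambda>t. tame_prefix k w @ t) ` insertions r (tame_suffix k w) (Suc n))"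
    (is "_ = ?U")
proof
  show "?U \<subseteq> dual_words k r (Suc n)"
    using tame_prefix_append_insertion_in_dual_words[OF assms(1)] by blast
next
  show "dual_words k r (Suc n) \<subseteq> ?U"
  proof
    fix w assume "w \<in> dual_words k r (Suc n)"
    then have set_w: "set w \<subseteq> {1..Suc n}" and count_w: "\<forall>i\<in>{1..Suc n}. count_list w i = r"
      and avoid_w: "dual_avoiding k w"
      unfolding dual_words_def words_def by auto
    let ?M = "Suc n"
    define w' where "w' = filter (\<lambda>z. z \<noteq> ?M) w"
    have max: "\<forall>z\<in>set w. z \<le> ?M" using set_w by auto
    have "count_list w ?M = r" using count_w by simp
    then have "?M \<in> set w" using assms(2) count_list_0_iff[of w ?M] by auto
    then obtain u v where uv: "w = u @ ?M # v" "?M \<notin> set u" by (meson split_list_first)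
    have "set w' \<subseteq> {1..n}" using set_w unfolding w'_def by (auto simp: le_Suc_eq)
    moreover have "\<forall>i\<in>{1..n}. count_list w' i = r"
      using count_w unfolding w'_def by (auto simp: count_list_filter)
    moreover have "dual_avoiding k w'"
      using dual_avoiding_max_iff[OF max] avoid_w unfolding w'_def by blast
    ultimately have w'_in: "w' \<in> dual_words k r n" unfolding dual_words_def words_def by simp
    have u_id: "filter (\<lambda>z. z \<noteq> ?M) u = u" using uv(2) by (auto simp: filter_id_conv)
    have w'_eq: "w' = u @ filter (\<lambda>z. z \<noteq> ?M) v" unfolding w'_def using uv u_id by simp
    \<comment> \<open>the first new letter lies inside the tame suffix of \<open>w'\<close>\<close>
    define p where "p = tame_start k w'"
    have "tame k (filter (\<lambda>z. z \<noteq> ?M) v)"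
      using dual_avoiding_max_iff[OF max] avoid_w uv(1) by blast
    then have p_le: "p \<le> length u" unfolding p_def using w'_eq by (intro tame_start_le) simp
    have prefix: "tame_prefix k w' = take p w"
      unfolding tame_prefix_def p_def[symmetric] using w'_eq uv(1) p_le by simp
    define t where "t = drop p w"
    have "filter (\<lambda>z. z \<noteq> ?M) t = drop p u @ filter (\<lambda>z. z \<noteq> ?M) v"
      unfolding t_def using uv p_le set_drop_subset[of p u] by (auto simp: filter_id_conv)
    also have "\<dots> = tame_suffix k w'"
      unfolding tame_suffix_def p_def[symmetric] using w'_eq p_le by simp
    finally have "filter (\<lambda>z. z \<noteq> ?M) t = tame_suffix k w'" .
    moreover have "count_list t ?M = r"
      using \<open>count_list w ?M = r\<close> uv p_le set_drop_subset[of p u]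
      unfolding t_def by (auto simp: count_list_0_iff)
    ultimately have "t \<in> insertions r (tame_suffix k w') ?M" unfolding insertions_def by simp
    moreover have "w = tame_prefix k w' @ t" unfolding prefix t_def by simp
    ultimately show "w \<in> ?U" using w'_in by blast
  qed
qed


lemma card_dual_words_Suc_state:
  assumes "k \<ge> 2" "r \<ge> 1"
  shows "card {w \<in> dual_words k r (Suc n). std (tame_suffix k w) = T'} =
    (\<Sum>w\<in>dual_words k r n. transfer r k (std (tame_suffix k w)) T')"
proof -
  define F where "F w = (\<lambda>t. tame_prefix k w @ t) `
    {t \<in> insertions r (tame_suffix k w) (Suc n). std (tame_suffix k t) = T'}" for w
  have letters: "Suc n \<notin> set w" if "w \<in> dual_words k r n" for w
    using that unfolding dual_words_def words_def by auto
  have "{w \<in> dual_words k r (Suc n). std (tame_suffix k w) = T'} = (\<Union>w\<in>dual_words k r n. F w)"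
    unfolding dual_words_Suc_eq_UN[OF assms] F_def
    using tame_suffix_tame_prefix_append_insertion[OF assms(1) letters] by fastforce
  moreover have "F w1 \<inter> F w2 = {}"
    if "w1 \<in> dual_words k r n" "w2 \<in> dual_words k r n" "w1 \<noteq> w2" for w1 w2
  proof -
    have "w1 = w2" if "x \<in> F w1" "x \<in> F w2" for x
    proof -
      obtain t1 t2 where "t1 \<in> insertions r (tame_suffix k w1) (Suc n)" "x = tame_prefix k w1 @ t1"
        "t2 \<in> insertions r (tame_suffix k w2) (Suc n)" "x = tame_prefix k w2 @ t2"
        using \<open>x \<in> F w1\<close> \<open>x \<in> F w2\<close> unfolding F_def by blast
      then show ?thesis
        using filter_tame_prefix_append_insertion letters \<open>w1 \<in> dual_words k r n\<close>
          \<open>w2 \<in> dual_words k r n\<close> by metis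
    qed
    then show ?thesis using \<open>w1 \<noteq> w2\<close> by blast
  qed
  moreover have "card (F w) = transfer r k (std (tame_suffix k w)) T'"
    if "w \<in> dual_words k r n" for w
  proof -
    have "card (F w) = card {t \<in> insertions r (tame_suffix k w) (Suc n). std (tame_suffix k t) = T'}"
      unfolding F_def by (rule card_image) (simp add: inj_on_def)
    also have "\<dots> = transfer r k (std (tame_suffix k w)) T'"
      using that set_tame_suffix_subset[of k w] unfolding dual_words_def words_def
      by (intro card_insertions_tame_suffix) auto
    finally show ?thesis .
  qed
  moreover have "finite (F w)" for w
    unfolding F_def using finite_insertions by simp
  ultimately show ?thesis
    by (simp add: card_UN_disjoint[OF finite_dual_words])
qed

definition states :: "nat \<Rightarrow> nat list set" where
  "states L = {T. set T \<subseteq> {..<L} \<and> length T \<le> L}"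

lemma finite_states: "finite (states L)"
  unfolding states_def by (rule finite_lists_length_le) simp

lemma std_tame_suffix_in_states:
  assumes "k \<ge> 3" "w \<in> words n r"
  shows "std (tame_suffix k w) \<in> states (r * (2 * (k - 1)))"
proof -
  have "count_list (tame_suffix k w) a \<le> r" for a
  proof -
    have "count_list w a = count_list (tame_prefix k w) a + count_list (tame_suffix k w) a"
      by (metis count_list_append tame_prefix_append_tame_suffix)
    then have "count_list (tame_suffix k w) a \<le> count_list w a" by simp
    also have "\<dots> \<le> r"
    proof (cases "a \<in> {1..n}")
      case False
      then have "a \<notin> set w" using assms(2) unfolding words_def by auto
      then show ?thesis by simp
    qed (use assms(2) in \<open>simp add: words_def\<close>)
    finally show ?thesis .
  qed
  then have "length (tame_suffix k w) \<le> r * (2 * (k - 1))"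
    using tame_length_le[OF assms(1) tame_tame_suffix] assms(1) by simp
  then show ?thesis unfolding states_def using set_std_subset[of "tame_suffix k w"] by auto
qed


section \<open>Linear recurrences from transfer matrices\<close>

lemma exists_nontrivial_vanishing_combination:
  fixes v :: "'i \<Rightarrow> 'x \<Rightarrow> 'f::field"
  assumes "finite S" "finite I" "card S < card I"
  shows "\<exists>a. (\<exists>i\<in>I. a i \<noteq> 0) \<and> (\<forall>y\<in>S. (\<Sum>i\<in>I. a i * v i y) = 0)"
  using assms
proof (induction S arbitrary: I v rule: finite_induct)
  case empty
  then have "I \<noteq> {}" by auto
  then show ?case by (intro exI[of _ "\<lambda>_. 1"]) auto
next
  case (insert x S)
  show ?case
  proof (cases "\<forall>i\<in>I. v i x = 0")
    case True
    have "card S < card I" using insert by simp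
    then obtain a where "\<exists>i\<in>I. a i \<noteq> 0" "\<forall>y\<in>S. (\<Sum>i\<in>I. a i * v i y) = 0"
      using insert.IH insert.prems(1) by blast
    then show ?thesis using True by (intro exI[of _ a]) auto
  next
    case False
    \<comment> \<open>eliminate the coordinate \<open>x\<close> with a vector \<open>v j\<close> such that \<open>v j x \<noteq> 0\<close>\<close>
    then obtain j where j: "j \<in> I" "v j x \<noteq> 0" by blast
    define I' where "I' = I - {j}"
    have "finite I'" "card S < card I'"
      unfolding I'_def using insert j by (simp_all add: card_Diff_singleton)
    define v' where "v' i y = v i y - (v i x / v j x) * v j y" for i y
    obtain b where b: "\<exists>i\<in>I'. b i \<noteq> 0" "\<forall>y\<in>S. (\<Sum>i\<in>I'. b i * v' i y) = 0"
      using insert.IH[OF \<open>finite I'\<close> \<open>card S < card I'\<close>, of v'] by blast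
    define a where "a i = (if i = j then - (\<Sum>i\<in>I'. b i * v i x) / v j x else b i)" for i
    have sum_a: "(\<Sum>i\<in>I. a i * v i y) = a j * v j y + (\<Sum>i\<in>I'. b i * v i y)" for y
    proof -
      have "(\<Sum>i\<in>I. a i * v i y) = a j * v j y + (\<Sum>i\<in>I'. a i * v i y)"
        unfolding I'_def using j insert.prems(1) by (simp add: sum.remove)
      moreover have "(\<Sum>i\<in>I'. a i * v i y) = (\<Sum>i\<in>I'. b i * v i y)"
        unfolding I'_def a_def by (intro sum.cong) auto
      ultimately show ?thesis by simp
    qed
    have sum_b: "(\<Sum>i\<in>I'. b i * v' i y) =
        (\<Sum>i\<in>I'. b i * v i y) - (\<Sum>i\<in>I'. b i * v i x) / v j x * v j y" for y
    proof -
      have "(\<Sum>i\<in>I'. b i * v' i y) = (\<Sum>i\<in>I'. b i * v i y - (b i * v i x) / v j x * v j y)"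
        unfolding v'_def by (intro sum.cong) (auto simp: algebra_simps)
      also have "\<dots> = (\<Sum>i\<in>I'. b i * v i y) - (\<Sum>i\<in>I'. (b i * v i x) / v j x * v j y)"
        by (simp add: sum_subtractf)
      also have "(\<Sum>i\<in>I'. (b i * v i x) / v j x * v j y) = (\<Sum>i\<in>I'. b i * v i x) / v j x * v j y"
        by (simp add: sum_distrib_right sum_divide_distrib)
      finally show ?thesis .
    qed
    have a_j: "a j = - (\<Sum>i\<in>I'. b i * v i x) / v j x" unfolding a_def by simp
    show ?thesis
    proof (intro exI[of _ a] conjI ballI)
      obtain i where "i \<in> I'" "b i \<noteq> 0" using b(1) by blast
      then show "\<exists>i\<in>I. a i \<noteq> 0" unfolding a_def I'_def by (intro bexI[of _ i]) auto
    next
      fix y assume y: "y \<in> insert x S"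
      show "(\<Sum>i\<in>I. a i * v i y) = 0"
      proof (cases "y = x")
        case True
        then show ?thesis using sum_a[of x] a_j j(2) by simp
      next
        case False
        then have "(\<Sum>i\<in>I'. b i * v i y) = (\<Sum>i\<in>I'. b i * v i x) / v j x * v j y"
          using y b(2) sum_b[of y] by simp
        then show ?thesis using sum_a[of y] a_j by simp
      qed
    qed
  qed
qed

lemma vanishing_combination_shift:
  fixes v :: "nat \<Rightarrow> 'x \<Rightarrow> 'f::field"
  assumes step: "\<And>n y. y \<in> S \<Longrightarrow> v (Suc n) y = (\<Sum>x\<in>S. B x y * v n x)"
    and base: "\<forall>y\<in>S. (\<Sum>j\<le>m. a j * v j y) = 0"
  shows "\<forall>y\<in>S. (\<Sum>j\<le>m. a j * v (n + j) y) = 0"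
proof (induction n)
  case (Suc n)
  show ?case
  proof
    fix y assume "y \<in> S"
    then have "(\<Sum>j\<le>m. a j * v (Suc n + j) y) = (\<Sum>j\<le>m. \<Sum>x\<in>S. B x y * (a j * v (n + j) x))"
      using step by (simp add: sum_distrib_left algebra_simps)
    also have "\<dots> = (\<Sum>x\<in>S. B x y * (\<Sum>j\<le>m. a j * v (n + j) x))"
      by (subst sum.swap) (simp add: sum_distrib_left)
    also have "\<dots> = 0" using Suc.IH by simp
    finally show "(\<Sum>j\<le>m. a j * v (Suc n + j) y) = 0" .
  qed
qed (use base in simp)

text \<open>A transfer matrix \<open>B\<close> on a finite state set \<open>S\<close> yields a linear recurrence for the total
  weight; the coefficients come from a vanishing combination of the first \<open>card S + 1\<close> vectors.\<close>

lemma linear_recurrence_of_transfer: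
  fixes v :: "nat \<Rightarrow> 'x \<Rightarrow> 'f::field"
  assumes "finite S" and step: "\<And>n y. y \<in> S \<Longrightarrow> v (Suc n) y = (\<Sum>x\<in>S. B x y * v n x)"
  shows "\<exists>m c. \<forall>n. (\<Sum>y\<in>S. v (n + m) y) = (\<Sum>i=1..m. c i * (\<Sum>y\<in>S. v (n + m - i) y))"
proof -
  define D where "D n = (\<Sum>y\<in>S. v n y)" for n
  obtain a where a: "\<exists>i\<in>{..card S}. a i \<noteq> 0" "\<forall>y\<in>S. (\<Sum>i\<le>card S. a i * v i y) = 0"
    using exists_nontrivial_vanishing_combination[OF assms(1), of "{..card S}" v] by auto
  define J where "J = {j \<in> {..card S}. a j \<noteq> 0}"
  define m where "m = Max J"
  have "finite J" "J \<noteq> {}" unfolding J_def using a(1) by auto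
  then have am: "a m \<noteq> 0" and "m \<le> card S"
    using Max_in[of J] unfolding m_def J_def by auto
  have "a j = 0" if "m < j" "j \<le> card S" for j
    using Max_ge[OF \<open>finite J\<close>, of j] that unfolding m_def J_def by fastforce
  then have "(\<Sum>j\<le>m. a j * v j y) = (\<Sum>j\<le>card S. a j * v j y)" for y
    using \<open>m \<le> card S\<close> by (intro sum.mono_neutral_left) auto
  then have "\<forall>y\<in>S. (\<Sum>j\<le>m. a j * v j y) = 0"
    using a(2) by simp
  then have "\<forall>y\<in>S. (\<Sum>j\<le>m. a j * v (n + j) y) = 0" for n
    using vanishing_combination_shift[where S = S and v = v and B = B, OF step] by blast
  then have D_comb: "(\<Sum>j\<le>m. a j * D (n + j)) = 0" for n
  proof -
    have "(\<Sum>j\<le>m. a j * D (n + j)) = (\<Sum>j\<le>m. \<Sum>y\<in>S. a j * v (n + j) y)"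
      unfolding D_def by (simp add: sum_distrib_left)
    also have "\<dots> = (\<Sum>y\<in>S. \<Sum>j\<le>m. a j * v (n + j) y)"
      by (rule sum.swap)
    finally show ?thesis using \<open>\<forall>y\<in>S. (\<Sum>j\<le>m. a j * v (n + j) y) = 0\<close> by simp
  qed
  have D_rec: "a m * D (n + m) = - (\<Sum>j<m. a j * D (n + j))" for n
  proof -
    have "(\<Sum>j\<le>m. a j * D (n + j)) = a m * D (n + m) + (\<Sum>j<m. a j * D (n + j))"
      by (simp add: lessThan_Suc_atMost[symmetric])
    then show ?thesis using D_comb[of n] by (simp add: eq_neg_iff_add_eq_0)
  qed
  define c where "c i = - a (m - i) / a m" for i
  have "D (n + m) = (\<Sum>i=1..m. c i * D (n + m - i))" for n
  proof -
    let ?f = "\<lambda>j. - a j / a m * D (n + j)"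
    have "(\<Sum>i=1..m. c i * D (n + m - i)) = (\<Sum>i=1..m. ?f (m - i))"
      unfolding c_def by (intro sum.cong) auto
    also have "\<dots> = (\<Sum>j<m. ?f j)"
      by (rule sum.reindex_bij_witness[of _ "\<lambda>j. m - j" "\<lambda>i. m - i"]) auto
    also have "\<dots> = - (\<Sum>j<m. a j * D (n + j)) / a m"
      by (simp add: sum_divide_distrib sum_negf)
    also have "\<dots> = D (n + m)"
      using D_rec[of n] am by (simp add: field_simps)
    finally show ?thesis by simp
  qed
  then show ?thesis unfolding D_def by blast
qed


lemma card_dual_words_state_Suc:
  assumes "k \<ge> 3" "r \<ge> 1"
  defines "L \<equiv> r * (2 * (k - 1))"
  shows "card {w \<in> dual_words k r (Suc n). std (tame_suffix k w) = T'} =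
    (\<Sum>T\<in>states L. transfer r k T T' * card {w \<in> dual_words k r n. std (tame_suffix k w) = T})"
proof -
  have "std (tame_suffix k w) \<in> states L" if "w \<in> dual_words k r n" for w
    using std_tame_suffix_in_states[OF assms(1)] that unfolding L_def dual_words_def by blast
  then have "(\<Sum>w\<in>dual_words k r n. transfer r k (std (tame_suffix k w)) T') =
    (\<Sum>T\<in>states L. \<Sum>w\<in>{w \<in> dual_words k r n. std (tame_suffix k w) = T}. transfer r k (std (tame_suffix k w)) T')"
    by (intro sum.group[symmetric] finite_dual_words finite_states) blast
  also have "\<dots> = (\<Sum>T\<in>states L. transfer r k T T' * card {w \<in> dual_words k r n. std (tame_suffix k w) = T})"
    by (intro sum.cong) auto
  finally show ?thesis
    using card_dual_words_Suc_state assms(1,2) by simp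
qed

lemma card_dual_words_eq_sum_states:
  assumes "k \<ge> 3"
  shows "card (dual_words k r n) =
    (\<Sum>T\<in>states (r * (2 * (k - 1))). card {w \<in> dual_words k r n. std (tame_suffix k w) = T})"
proof -
  have "std (tame_suffix k w) \<in> states (r * (2 * (k - 1)))" if "w \<in> dual_words k r n" for w
    using std_tame_suffix_in_states[OF assms] that unfolding dual_words_def by blast
  then have "(\<Sum>w\<in>dual_words k r n. 1) =
    (\<Sum>T\<in>states (r * (2 * (k - 1))). \<Sum>w\<in>{w \<in> dual_words k r n. std (tame_suffix k w) = T}. 1)"
    by (intro sum.group[symmetric] finite_dual_words finite_states) blast
  then show ?thesis by (simp only: card_eq_sum)
qed

definition complement :: "nat \<Rightarrow> nat list \<Rightarrow> nat list" where
  "complement n w = map (\<lambda>x. Suc n - x) w"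

lemma complement_complement: "set w \<subseteq> {1..n} \<Longrightarrow> complement n (complement n w) = w"
  unfolding complement_def by (induction w) auto

lemma complement_in_words:
  assumes "w \<in> words n r"
  shows "complement n w \<in> words n r"
proof -
  have w: "set w \<subseteq> {1..n}" "\<forall>i\<in>{1..n}. count_list w i = r"
    using assms unfolding words_def by auto
  have "count_list (complement n w) i = r" if i: "i \<in> {1..n}" for i
  proof -
    have "\<forall>x\<in>insert (Suc n - i) (set w). x \<le> Suc n"
      using w(1) by auto
    then have "inj_on (\<lambda>x. Suc n - x) (insert (Suc n - i) (set w))"
      by (intro inj_onI) (metis diff_diff_cancel)
    then have "count_list (complement n w) (Suc n - (Suc n - i)) = count_list w (Suc n - i)"
      unfolding complement_def by (rule count_list_map_inj_on)
    moreover have "Suc n - i \<in> {1..n}" using i by auto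
    ultimately show ?thesis using w(2) i by simp
  qed
  moreover have "set (complement n w) \<subseteq> {1..n}"
    using w(1) unfolding complement_def by (fastforce simp: subset_iff)
  ultimately show ?thesis unfolding words_def by auto
qed

text \<open>Complementing letters turns 1234 into 4321 and \<open>1 k (k-1) \<dots> 2\<close> into \<open>k 1 2 \<dots> (k-1)\<close>.\<close>

lemma dual_avoiding_complement_iff:
  assumes "set w \<subseteq> {1..n}"
  shows "dual_avoiding k (complement n w) \<longleftrightarrow> avoids w [1, 2, 3, 4] \<and> avoids w (pat1k k)"
proof -
  have anti: "strict_antimono_on (set w) (\<lambda>x. Suc n - x)"
    using assms by (auto simp: monotone_on_def)
  have "contains (complement n w) (map (\<lambda>x. 5 - x) [1, 2, 3, 4]) \<longleftrightarrow> contains w [1, 2, 3, 4]"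
    unfolding complement_def by (rule contains_map_antimono[OF anti]) (auto simp: monotone_on_def)
  moreover have "contains (complement n w) (map (\<lambda>x. Suc k - x) (pat1k k)) \<longleftrightarrow> contains w (pat1k k)"
    unfolding complement_def
    by (rule contains_map_antimono[OF anti]) (auto simp: pat1k_def monotone_on_def)
  moreover have "map (\<lambda>x. Suc k - x) (pat1k k) = k # [1..<k]"
    unfolding pat1k_def by (auto intro: nth_equalityI simp: rev_nth simp del: upt_Suc)
  ultimately show ?thesis
    unfolding dual_avoiding_def avoids_def by simp
qed

lemma d_eq_card_dual_words: "d k r n = card (dual_words k r n)"
proof -
  let ?A = "{w \<in> words n r. avoids w [1, 2, 3, 4] \<and> avoids w (pat1k k)}"
  have letters: "set w \<subseteq> {1..n}" if "w \<in> words n r" for w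
    using that unfolding words_def by simp
  have "bij_betw (complement n) ?A (dual_words k r n)"
  proof (rule bij_betw_byWitness[where f' = "complement n"])
    show "complement n ` ?A \<subseteq> dual_words k r n"
      using complement_in_words dual_avoiding_complement_iff letters
      unfolding dual_words_def by auto
    show "complement n ` dual_words k r n \<subseteq> ?A"
    proof
      fix w' assume "w' \<in> complement n ` dual_words k r n"
      then obtain w where w: "w \<in> words n r" "dual_avoiding k w" "w' = complement n w"
        unfolding dual_words_def by auto
      then have "dual_avoiding k (complement n w')"
        using complement_complement letters by simp
      then show "w' \<in> ?A"
        using w complement_in_words dual_avoiding_complement_iff letters by blast
    qed
  qed (use complement_complement letters in \<open>auto simp: dual_words_def\<close>)
  then show ?thesis unfolding d_def by (rule bij_betw_same_card)
qed


theorem mainTheorem4: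
  fixes k r :: nat
  assumes "k \<ge> 3" and "r \<ge> 1"
  shows "\<exists>(m::nat) (c::nat \<Rightarrow> rat) (N::nat). \<forall>n\<ge>N.
           of_nat (d k r (n + m)) = (\<Sum>i=1..m. c i * of_nat (d k r (n + m - i)))"
proof -
  define L where "L = r * (2 * (k - 1))"
  define v :: "nat \<Rightarrow> nat list \<Rightarrow> rat"
    where "v n T = of_nat (card {w \<in> dual_words k r n. std (tame_suffix k w) = T})" for n T
  have step: "v (Suc n) T' = (\<Sum>T\<in>states L. of_nat (transfer r k T T') * v n T)" for n T'
    unfolding v_def L_def card_dual_words_state_Suc[OF assms] by (simp add: of_nat_sum)
  have d_sum: "of_nat (d k r n) = (\<Sum>T\<in>states L. v n T)" for n
    unfolding v_def L_def d_eq_card_dual_words card_dual_words_eq_sum_states[OF assms(1)]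
    by (simp add: of_nat_sum)
  obtain m c where "\<forall>n. (\<Sum>T\<in>states L. v (n + m) T) = (\<Sum>i=1..m. c i * (\<Sum>T\<in>states L. v (n + m - i) T))"
    using linear_recurrence_of_transfer[where v = v, OF finite_states step] by blast
  then show ?thesis
    unfolding d_sum by blast
qed

end
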